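(* Let $D=(V,A)$ be a minimally Steiner rooted $k$-arc-connected $3$-regular directed graph with root $r$ and terminal set $S\subseteq V\setminus\{r\}$, and let $C\subseteq A$ be a directed cycle. For each $s\in S$, let $Q_s\subseteq A$ be an inclusionwise minimal set of arcs that is the arc-disjoint union of $k$ directed $r$-$s$ paths. Then (a) $C\subseteq\bigcup_{s\in S}Q_s$, and (b) $C\setminus Q_s\neq\emptyset$ for all $s\in S$.
   Context: Directed graphs are loopless, parallel arcs allowed. $D$ with root $r$ and terminals $S$ is Steiner rooted $k$-arc-connected if for every $s\in S$ there are $k$ pairwise arc-disjoint directed $r$-$s$ paths; it is minimally so if in addition deleting any arc destroys this property. $D$ is $3$-regular (with respect to $k$) if $r$ has in-degree $0$ and out-degree $k$, every terminal has in-degree $k$ and out-degree $0$, and every other vertex has in-degree plus out-degree $3$. *)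

theory Defs
  imports "Graph_Theory.Graph_Theory"
begin

text \<open>Digraphs are Graph_Theory pre_digraphs (arcs are abstract objects, so parallel
arcs are allowed); directed paths are apath, directed cycles are cycle.\<close>

definition arc_disjoint_path_family ::
  "('a,'b) pre_digraph \<Rightarrow> 'a \<Rightarrow> 'a \<Rightarrow> nat \<Rightarrow> 'b list list \<Rightarrow> bool" where
  "arc_disjoint_path_family G r s k P \<longleftrightarrow>
     length P = k \<and> (\<forall>p\<in>set P. pre_digraph.apath G r p s) \<and>
     (\<forall>i<k. \<forall>j<k. i \<noteq> j \<longrightarrow> set (P ! i) \<inter> set (P ! j) = {})"

definition steiner_rooted_k_arc_connected ::
  "('a,'b) pre_digraph \<Rightarrow> 'a \<Rightarrow> 'a set \<Rightarrow> nat \<Rightarrow> bool" where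
  "steiner_rooted_k_arc_connected G r S k \<longleftrightarrow>
     (\<forall>s\<in>S. \<exists>P. arc_disjoint_path_family G r s k P)"

definition minimally_steiner_rooted_k_arc_connected ::
  "('a,'b) pre_digraph \<Rightarrow> 'a \<Rightarrow> 'a set \<Rightarrow> nat \<Rightarrow> bool" where
  "minimally_steiner_rooted_k_arc_connected G r S k \<longleftrightarrow>
     steiner_rooted_k_arc_connected G r S k \<and>
     (\<forall>a\<in>arcs G. \<not> steiner_rooted_k_arc_connected (pre_digraph.del_arc G a) r S k)"

definition three_regular :: "('a,'b) pre_digraph \<Rightarrow> 'a \<Rightarrow> 'a set \<Rightarrow> nat \<Rightarrow> bool" where
  "three_regular G r S k \<longleftrightarrow>
     in_degree G r = 0 \<and> out_degree G r = k \<and>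
     (\<forall>s\<in>S. in_degree G s = k \<and> out_degree G s = 0) \<and>
     (\<forall>v\<in>verts G - ({r} \<union> S). in_degree G v + out_degree G v = 3)"

definition is_arc_disjoint_path_union ::
  "('a,'b) pre_digraph \<Rightarrow> 'a \<Rightarrow> 'a \<Rightarrow> nat \<Rightarrow> 'b set \<Rightarrow> bool" where
  "is_arc_disjoint_path_union G r s k Q \<longleftrightarrow>
     (\<exists>P. arc_disjoint_path_family G r s k P \<and> Q = (\<Union>p\<in>set P. set p))"

definition minimal_arc_disjoint_path_union ::
  "('a,'b) pre_digraph \<Rightarrow> 'a \<Rightarrow> 'a \<Rightarrow> nat \<Rightarrow> 'b set \<Rightarrow> bool" where
  "minimal_arc_disjoint_path_union G r s k Q \<longleftrightarrow>
     is_arc_disjoint_path_union G r s k Q \<and>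
     (\<forall>Q'. Q' \<subset> Q \<longrightarrow> \<not> is_arc_disjoint_path_union G r s k Q')"

end

theory Submission
  imports Defs
begin

text \<open>Part (a) holds for every arc: an arc outside all the \<open>Q s\<close> could be deleted without
destroying any of the path families, contradicting minimality. For part (b), in a family of
arc-disjoint \<open>r\<close>-\<open>s\<close> paths every vertex other than \<open>r\<close> is entered by at least as many arcs of
the family as leave it. A vertex of the cycle \<open>C\<close> is neither \<open>r\<close> (in-degree 0) nor a terminal
(out-degree 0), so it has degree 3. Hence if \<open>C \<subseteq> Q s\<close>, the only arc of \<open>Q s\<close> leaving a cycle
vertex is the cycle arc. A path of \<open>Q s\<close> through an arc of \<open>C\<close> then never leaves \<open>C\<close>, so its
end \<open>s\<close> lies on \<open>C\<close> and has an outgoing arc, which is impossible.\<close>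

lemma apath_del_arc:
  assumes "pre_digraph.apath G u p v" "e \<notin> set p"
  shows "pre_digraph.apath (pre_digraph.del_arc G e) u p v"
proof -
  have "compatible G (pre_digraph.del_arc G e)"
    by (simp add: compatible_def pre_digraph.del_arc_simps)
  then show ?thesis
    using assms
    by (auto simp: pre_digraph.apath_def pre_digraph.awalk_def pre_digraph.del_arc_simps
        compatible_cas compatible_awalk_verts)
qed

context wf_digraph
begin

lemma cas_tails_subset_heads: "cas u p v \<Longrightarrow> tail G ` set p \<subseteq> insert u (head G ` set p)"
  using set_awalk_verts_cas[of u p v] awalk_verts_conv'[of u p v] by (cases p) auto

lemma cas_end_in_closed_set:
  assumes "cas u p w" "u \<in> X" "\<And>b. b \<in> set p \<Longrightarrow> tail G b \<in> X \<Longrightarrow> head G b \<in> X"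
  shows "w \<in> X"
  using assms by (induct p arbitrary: u) auto

lemma apath_tail_inj_on: "apath u p v \<Longrightarrow> inj_on (tail G) (set p)"
  by (cases "p = []") (auto simp: apath_def awalk_verts_conv distinct_map)

lemma cycle_heads_eq_tails:
  assumes "cycle c" shows "head G ` set c = tail G ` set c"
proof -
  obtain u where cas: "cas u c u" and ne: "c \<noteq> []"
    using assms by (auto simp: cycle_def awalk_def)
  have first: "tail G (hd c) = u" using cas ne by (cases c) auto
  have last: "head G (last c) = u" using awlast_if_cas[OF cas] ne by (simp add: awalk_verts_conv)
  have "insert u (head G ` set c) = set (awalk_verts u c)"
    using awalk_verts_conv'[OF cas] ne first by simp
  also have "\<dots> = insert u (tail G ` set c)"
    using awalk_verts_conv[of u c] ne last by auto
  finally show ?thesis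
    using first last ne by (metis hd_in_set last_in_set image_eqI insert_absorb)
qed

lemma arc_disjoint_path_family_apath:
  "arc_disjoint_path_family G r s k P \<Longrightarrow> p \<in> set P \<Longrightarrow> apath r p s"
  by (simp add: arc_disjoint_path_family_def)

lemma arc_disjoint_path_family_disjoint:
  assumes "arc_disjoint_path_family G r s k P" "p \<in> set P" "q \<in> set P" "p \<noteq> q"
  shows "set p \<inter> set q = {}"
proof -
  obtain i j where "i < length P" "j < length P" "P ! i = p" "P ! j = q"
    using assms(2,3) by (auto simp: in_set_conv_nth)
  with assms show ?thesis by (auto simp: arc_disjoint_path_family_def)
qed

lemma arc_disjoint_path_family_del_arc:
  "arc_disjoint_path_family G r s k P \<Longrightarrow> e \<notin> (\<Union>p\<in>set P. set p) \<Longrightarrow>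
    arc_disjoint_path_family (del_arc e) r s k P"
  by (auto simp: arc_disjoint_path_family_def intro!: apath_del_arc)

lemma arc_disjoint_path_union_subset_arcs:
  "is_arc_disjoint_path_union G r s k Q \<Longrightarrow> Q \<subseteq> arcs G"
  by (force simp: is_arc_disjoint_path_union_def apath_def awalk_def
      dest: arc_disjoint_path_family_apath)

lemma arcs_subset_arc_disjoint_path_unions:
  assumes "minimally_steiner_rooted_k_arc_connected G r S k"
    and "\<forall>s\<in>S. is_arc_disjoint_path_union G r s k (Q s)"
  shows "arcs G \<subseteq> (\<Union>s\<in>S. Q s)"
proof
  fix e assume "e \<in> arcs G"
  then have "\<not> steiner_rooted_k_arc_connected (del_arc e) r S k"
    using assms(1) by (simp add: minimally_steiner_rooted_k_arc_connected_def)
  then obtain s where s: "s \<in> S" and no_family: "\<And>P. \<not> arc_disjoint_path_family (del_arc e) r s k P"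
    unfolding steiner_rooted_k_arc_connected_def by blast
  obtain P where P: "arc_disjoint_path_family G r s k P" and Q: "Q s = (\<Union>p\<in>set P. set p)"
    using assms(2) s by (auto simp: is_arc_disjoint_path_union_def)
  have "e \<in> (\<Union>p\<in>set P. set p)"
    using no_family arc_disjoint_path_family_del_arc[OF P] by blast
  with s Q show "e \<in> (\<Union>s\<in>S. Q s)" by blast
qed

lemma arc_disjoint_path_union_card_out_le_in:
  assumes "is_arc_disjoint_path_union G r s k Q" "v \<noteq> r"
  shows "card (out_arcs G v \<inter> Q) \<le> card (in_arcs G v \<inter> Q)"
proof -
  obtain P where P: "arc_disjoint_path_family G r s k P" and Q: "Q = (\<Union>p\<in>set P. set p)"
    using assms(1) by (auto simp: is_arc_disjoint_path_union_def)
  have "\<forall>b\<in>out_arcs G v \<inter> Q. \<exists>f. \<exists>p\<in>set P. b \<in> set p \<and> f \<in> set p \<and> head G f = v"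
  proof
    fix b assume b: "b \<in> out_arcs G v \<inter> Q"
    then obtain p where p: "p \<in> set P" "b \<in> set p" unfolding Q by blast
    have "cas r p s"
      using arc_disjoint_path_family_apath[OF P p(1)] by (simp add: apath_def awalk_def)
    then have "tail G b \<in> insert r (head G ` set p)"
      using cas_tails_subset_heads p(2) by blast
    moreover have "tail G b = v" using b by simp
    ultimately obtain f where "f \<in> set p" "head G f = v" using assms(2) by auto
    then show "\<exists>f. \<exists>p\<in>set P. b \<in> set p \<and> f \<in> set p \<and> head G f = v" using p by blast
  qed
  from bchoice[OF this] obtain g where
    g: "\<forall>b\<in>out_arcs G v \<inter> Q. \<exists>p\<in>set P. b \<in> set p \<and> g b \<in> set p \<and> head G (g b) = v"
    by blast
  have "inj_on g (out_arcs G v \<inter> Q)"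
  proof (rule inj_onI)
    fix b b' assume b: "b \<in> out_arcs G v \<inter> Q" and b': "b' \<in> out_arcs G v \<inter> Q"
      and "g b = g b'"
    obtain p where p: "p \<in> set P" "b \<in> set p" "g b \<in> set p" using g b by blast
    obtain p' where p': "p' \<in> set P" "b' \<in> set p'" "g b' \<in> set p'" using g b' by blast
    have "g b \<in> set p \<inter> set p'" using p(3) p'(3) \<open>g b = g b'\<close> by simp
    then have "p = p'" using arc_disjoint_path_family_disjoint[OF P p(1) p'(1)] by auto
    moreover have "tail G b = tail G b'" using b b' by simp
    ultimately show "b = b'"
      using apath_tail_inj_on[OF arc_disjoint_path_family_apath[OF P p(1)]] p(2) p'(2)
      by (simp add: inj_on_def)
  qed
  moreover have "g ` (out_arcs G v \<inter> Q) \<subseteq> in_arcs G v \<inter> Q"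
  proof (rule image_subsetI)
    fix b assume "b \<in> out_arcs G v \<inter> Q"
    then obtain p where "p \<in> set P" "g b \<in> set p" "head G (g b) = v" using g by blast
    moreover have "Q \<subseteq> arcs G" using arc_disjoint_path_union_subset_arcs[OF assms(1)] .
    ultimately show "g b \<in> in_arcs G v \<inter> Q" using Q by auto
  qed
  moreover have "finite (in_arcs G v \<inter> Q)" using Q by simp
  ultimately show ?thesis by (rule card_inj_on_le)
qed

end

context fin_digraph
begin

lemma cycle_vertex_degrees_pos:
  assumes "cycle c" "v \<in> tail G ` set c"
  shows "0 < in_degree G v" "0 < out_degree G v"
proof -
  have "set c \<subseteq> arcs G" using assms(1) by (auto simp: cycle_def awalk_def)
  moreover have "v \<in> head G ` set c" using assms cycle_heads_eq_tails by blast
  ultimately have "in_arcs G v \<noteq> {}" "out_arcs G v \<noteq> {}"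
    using assms(2) by (auto simp: in_arcs_def out_arcs_def)
  then show "0 < in_degree G v" "0 < out_degree G v"
    by (auto simp: in_degree_def out_degree_def card_gt_0_iff)
qed

lemma three_regular_cycle_vertex_degree:
  assumes "three_regular G r S k" "cycle c" "v \<in> tail G ` set c"
  shows "in_degree G v + out_degree G v = 3"
proof -
  have "v \<in> verts G" using assms(2,3) by (auto simp: cycle_def awalk_def)
  moreover have "v \<noteq> r" "v \<notin> S"
    using assms cycle_vertex_degrees_pos[OF assms(2,3)] by (auto simp: three_regular_def)
  ultimately show ?thesis using assms(1) by (simp add: three_regular_def)
qed

text \<open>Two arcs of \<open>Q\<close> leaving \<open>v\<close> would force two arcs of \<open>Q\<close> entering it, i.e. degree at least 4.\<close>
lemma three_regular_path_union_arc_from_cycle: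
  assumes "three_regular G r S k" "is_arc_disjoint_path_union G r s k Q"
    and "cycle c" "set c \<subseteq> Q" "b \<in> Q" "tail G b \<in> tail G ` set c"
  shows "b \<in> set c"
proof (rule ccontr)
  assume "b \<notin> set c"
  define v where "v = tail G b"
  obtain e where e: "e \<in> set c" "tail G e = v" using assms(6) v_def by auto
  have "v \<noteq> r"
    using assms(1) cycle_vertex_degrees_pos[OF assms(3)] assms(6) v_def
    by (fastforce simp: three_regular_def)
  have Q_arcs: "Q \<subseteq> arcs G" using arc_disjoint_path_union_subset_arcs[OF assms(2)] .
  have "card {b, e} \<le> card (out_arcs G v \<inter> Q)"
    using e assms(4,5) Q_arcs v_def finite_out_arcs by (intro card_mono) auto
  moreover have "b \<noteq> e" using e(1) \<open>b \<notin> set c\<close> by blast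
  ultimately have out2: "2 \<le> card (out_arcs G v \<inter> Q)" by simp
  also have "\<dots> \<le> out_degree G v"
    unfolding out_degree_def by (intro card_mono) auto
  finally have "2 \<le> out_degree G v" .
  moreover have "2 \<le> in_degree G v"
  proof -
    note out2
    also have "card (out_arcs G v \<inter> Q) \<le> card (in_arcs G v \<inter> Q)"
      using arc_disjoint_path_union_card_out_le_in[OF assms(2) \<open>v \<noteq> r\<close>] .
    also have "\<dots> \<le> in_degree G v"
      unfolding in_degree_def by (intro card_mono) auto
    finally show ?thesis .
  qed
  ultimately show False
    using three_regular_cycle_vertex_degree[OF assms(1,3,6)] v_def by simp
qed

lemma three_regular_cycle_not_subset_path_union:
  assumes "three_regular G r S k" "s \<in> S" "is_arc_disjoint_path_union G r s k Q" "cycle c"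
  shows "\<not> set c \<subseteq> Q"
proof
  assume cQ: "set c \<subseteq> Q"
  obtain P where P: "arc_disjoint_path_family G r s k P" and Q: "Q = (\<Union>p\<in>set P. set p)"
    using assms(3) by (auto simp: is_arc_disjoint_path_union_def)
  obtain e where e: "e \<in> set c" using assms(4) hd_in_set unfolding cycle_def by blast
  then obtain p where p: "p \<in> set P" "e \<in> set p" using cQ Q by auto
  then obtain xs ys where "p = xs @ e # ys" by (meson split_list)
  moreover have "cas r p s"
    using arc_disjoint_path_family_apath[OF P p(1)] by (simp add: apath_def awalk_def)
  ultimately have "cas (head G e) ys s" by simp
  then have "s \<in> tail G ` set c"
  proof (rule cas_end_in_closed_set)
    show "head G e \<in> tail G ` set c" using e cycle_heads_eq_tails[OF assms(4)] by blast
    fix b assume b: "b \<in> set ys" "tail G b \<in> tail G ` set c"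
    have "b \<in> set p" using b(1) \<open>p = xs @ e # ys\<close> by simp
    then have "b \<in> Q" using p(1) Q by blast
    then have "b \<in> set c"
      by (rule three_regular_path_union_arc_from_cycle[OF assms(1,3,4) cQ _ b(2)])
    then show "head G b \<in> tail G ` set c" using cycle_heads_eq_tails[OF assms(4)] by blast
  qed
  then have "0 < out_degree G s" using cycle_vertex_degrees_pos[OF assms(4)] by blast
  then show False using assms(1,2) by (simp add: three_regular_def)
qed

end

theorem lemma2p8:
  fixes G :: "('a,'b) pre_digraph" and r :: 'a and S :: "'a set" and k :: nat
    and c :: "'b list" and Q :: "'a \<Rightarrow> 'b set"
  assumes "fin_digraph G" and "loopfree_digraph G"
    and "r \<in> verts G" and "S \<subseteq> verts G - {r}"
    and "minimally_steiner_rooted_k_arc_connected G r S k"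
    and "three_regular G r S k"
    and "pre_digraph.cycle G c"
    and "\<forall>s\<in>S. minimal_arc_disjoint_path_union G r s k (Q s)"
  shows "set c \<subseteq> (\<Union>s\<in>S. Q s) \<and> (\<forall>s\<in>S. set c - Q s \<noteq> {})"
proof -
  interpret fin_digraph G by fact
  have unions: "\<forall>s\<in>S. is_arc_disjoint_path_union G r s k (Q s)"
    using assms(8) by (simp add: minimal_arc_disjoint_path_union_def)
  have "set c \<subseteq> arcs G" using assms(7) by (auto simp: cycle_def awalk_def)
  also have "\<dots> \<subseteq> (\<Union>s\<in>S. Q s)"
    using arcs_subset_arc_disjoint_path_unions[OF assms(5) unions] .
  finally show ?thesis
    using three_regular_cycle_not_subset_path_union[OF assms(6) _ _ assms(7)] unions by blast
qed

end
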